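(* Let $d\in\mathbb N$ and $\varepsilon\in(0,1]$, and let $h=h(d,\varepsilon)$ be the height and $\mathcal P^d_\varepsilon$ the set of leaves of Thiémard's decomposition process (see context). Then $$h=\min\{r\in\mathbb N_0:\ W(Q^{(r)}_{\mathbf 1_r})\le\varepsilon\}$$ (with $Q^{(0)}_{\mathbf 1_0}:=Q^{(0)}_0=I^d$), and $$h\le \lceil d(\varepsilon^{-1}-1)\rceil.$$ Moreover, if $d=2$ then $$|\mathcal P^2_\varepsilon|\le 2\Big(\frac1\varepsilon+\frac12\Big)\frac1\varepsilon,$$ and if $d\ge3$ then $$|\mathcal P^d_\varepsilon|\le \frac{d^d}{d!}\Big(\frac1\varepsilon-\frac12\Big(1-\frac3d\Big)\Big)^d\le \frac{d^d}{d!}\,\varepsilon^{-d}.$$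
   Context: Fix $d\in\mathbb N$ and $\varepsilon\in(0,1]$. For $x,y\in[0,1]^d$ write $[x,y)=\prod_{i=1}^d[x_i,y_i)$ and define the weight $W([x,y))=\prod_{i=1}^d y_i-\prod_{i=1}^d x_i$. Thiémard's decomposition process generates boxes, each with a type in $\{1,\dots,d+1\}$. It starts with $I^d=[0,1)^d=[(0,\dots,0),(1,\dots,1))$, of type $1$. Whenever a generated box $P=[\alpha,\beta)$ has type $j\le d$ and $W(P)>\varepsilon$, it is decomposed (procedure DECOMPOSE$(P,j)$) as follows: put $$\delta^P=\left(\frac{\prod_{i=1}^d\beta_i-\varepsilon}{\prod_{i=1}^{j-1}\alpha_i\prod_{i=j}^d\beta_i}\right)^{1/(d-j+1)},\qquad \gamma^P_i=\alpha_i\ (i<j),\quad \gamma^P_i=\delta^P\beta_i\ (i\ge j).$$ The children of $P$ are the boxes $Q^P_k=[a^{(k)},b^{(k)})$ for $k=j,\dots,d$, where $a^{(k)}_i=\gamma^P_i$ for $i<k$, $a^{(k)}_i=\alpha_i$ for $i\ge k$, $b^{(k)}_k=\gamma^P_k$, $b^{(k)}_i=\beta_i$ for $i\neq k$; the box $Q^P_k$ has type $k$. In addition $P$ has the child $Q^P_{d+1}=[\gamma^P,\beta)$ of type $d+1$. A generated box of type $d+1$ or of weight at most $\varepsilon$ is not decomposed. (Known facts from Thiémard: $\delta^P\in(0,1)$; the process terminates after finitely many steps; $W(Q^P_{d+1})=\varepsilon$ and $W(Q^P_k)=\delta^PW(P)$ for $j\le k\le d$.) $\mathcal P^d_\varepsilon$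 denotes the set of all generated boxes that are not decomposed (the leaves of the process). Indexing: for $r\in\mathbb N$ let $S^r=\{\boldsymbol i\in\mathbb N^r: 1\le i_1\le\dots\le i_r\le d\}$, $S^0=\{0\}$, and $\mathbf 1_r=(1,\dots,1)\in\mathbb N^r$. Put $Q^{(0)}_0=I^d$, $Q^{(1)}_{j_1}=Q^{I^d}_{j_1}$ ($j_1=1,\dots,d$, defined when $W(I^d)>\varepsilon$), and for $\boldsymbol j\in S^r$ with $Q^{(r)}_{\boldsymbol j}$ generated and $W(Q^{(r)}_{\boldsymbol j})>\varepsilon$, $Q^{(r+1)}_{(\boldsymbol j,j_{r+1})}=Q^{Q^{(r)}_{\boldsymbol j}}_{j_{r+1}}$ for $j_{r+1}=j_r,\dots,d$. The height $h=h(d,\varepsilon)$ of the partition is $0$ if $W(I^d)\le\varepsilon$, and otherwise the largest $h\in\mathbb N$ such that there is $\boldsymbol j\in S^{h-1}$ with $Q^{(h-1)}_{\boldsymbol j}$ generated and $W(Q^{(h-1)}_{\boldsymbol j})>\varepsilon$. *)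

theory Defs
  imports Complex_Main
begin

text \<open>Boxes [x,y) in [0,1]^d are represented by pairs of coordinate functions
  (x, y) with coordinates indexed by 1..d.  Coordinates outside 1..d are never
  changed by the process (they stay 0 resp. 1).\<close>

type_synonym box = "(nat \<Rightarrow> real) \<times> (nat \<Rightarrow> real)"

definition weight :: "nat \<Rightarrow> box \<Rightarrow> real" where
  "weight d P = (\<Prod>i\<in>{1..d}. snd P i) - (\<Prod>i\<in>{1..d}. fst P i)"

definition unit_box :: box where
  "unit_box = ((\<lambda>_. 0), (\<lambda>_. 1))"

definition tdelta :: "nat \<Rightarrow> real \<Rightarrow> box \<Rightarrow> nat \<Rightarrow> real" where
  "tdelta d \<epsilon> P j =
     (((\<Prod>i\<in>{1..d}. snd P i) - \<epsilon>) /
       ((\<Prod>i\<in>{1..<j}. fst P i) * (\<Prod>i\<in>{j..d}. snd P i)))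
       powr (1 / real (d - j + 1))"

definition tgamma :: "nat \<Rightarrow> real \<Rightarrow> box \<Rightarrow> nat \<Rightarrow> nat \<Rightarrow> real" where
  "tgamma d \<epsilon> P j i = (if j \<le> i \<and> i \<le> d then tdelta d \<epsilon> P j * snd P i else fst P i)"

definition tchild :: "nat \<Rightarrow> real \<Rightarrow> box \<Rightarrow> nat \<Rightarrow> nat \<Rightarrow> box" where
  "tchild d \<epsilon> P j k =
     (if k = d + 1 then (tgamma d \<epsilon> P j, snd P)
      else ((\<lambda>i. if i < k then tgamma d \<epsilon> P j i else fst P i),
            (\<lambda>i. if i = k then tgamma d \<epsilon> P j i else snd P i)))"

text \<open>Node reached from I^d (type 1) by the sequence of child indices js
  (first index applied first); returns the box and its type.\<close>
definition tnode :: "nat \<Rightarrow> real \<Rightarrow> nat list \<Rightarrow> box \<times> nat" where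
  "tnode d \<epsilon> js = foldl (\<lambda>(P, t) k. (tchild d \<epsilon> P t k, k)) (unit_box, 1) js"

definition tgenerated :: "nat \<Rightarrow> real \<Rightarrow> nat list \<Rightarrow> bool" where
  "tgenerated d \<epsilon> js =
     (\<forall>i < length js.
        snd (tnode d \<epsilon> (take i js)) \<le> d \<and>
        weight d (fst (tnode d \<epsilon> (take i js))) > \<epsilon> \<and>
        snd (tnode d \<epsilon> (take i js)) \<le> js ! i \<and> js ! i \<le> d + 1)"

definition tleaves :: "nat \<Rightarrow> real \<Rightarrow> box set" where
  "tleaves d \<epsilon> = {fst (tnode d \<epsilon> js) | js. tgenerated d \<epsilon> js \<and>
       (snd (tnode d \<epsilon> js) = d + 1 \<or> weight d (fst (tnode d \<epsilon> js)) \<le> \<epsilon>)}"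

text \<open>Q^{(r)}_js with js \<in> S^r generated (entries in 1..d; nondecreasing
  is enforced by tgenerated).\<close>
definition tQgen :: "nat \<Rightarrow> real \<Rightarrow> nat list \<Rightarrow> bool" where
  "tQgen d \<epsilon> js = (tgenerated d \<epsilon> js \<and> (\<forall>k \<in> set js. 1 \<le> k \<and> k \<le> d))"

definition theight :: "nat \<Rightarrow> real \<Rightarrow> nat" where
  "theight d \<epsilon> =
     (if weight d unit_box \<le> \<epsilon> then 0
      else (GREATEST h. 1 \<le> h \<and> (\<exists>js. length js = h - 1 \<and> tQgen d \<epsilon> js \<and>
                                   weight d (fst (tnode d \<epsilon> js)) > \<epsilon>)))"

end

theory Submission
  imports Defs "HOL-Library.Multiset" "HOL-Analysis.Convex"
begin

text \<open>Along the leftmost chain Q^(r)_(1_r) the weight b_r satisfies b_(r+1) = \<rho>_r b_r with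
  \<rho>_r^d = 1 - \<epsilon>/b_r, so by Bernoulli's inequality it drops by at least \<epsilon>/d per step and
  reaches \<epsilon> within \<lceil>d(1/\<epsilon> - 1)\<rceil> steps. An induction over the process shows that every
  generated box at depth r weighs at most b_r and has \<delta> at most \<rho>_r, so the height is exactly
  the length of the leftmost chain. A leaf is reached by a nondecreasing word of length at
  most h over {1..d+1}; padding it with d+1 is injective, hence there are at most
  C(d+h, d) leaves, and the AM-GM inequality applied to C(d+h, d) d! = \<Prod>(h+i) gives the
  bounds.\<close>

lemma tnode_Nil [simp]: "tnode d e [] = (unit_box, 1)"
  by (simp add: tnode_def)

lemma tnode_snoc [simp]:
  "tnode d e (js @ [k]) = (tchild d e (fst (tnode d e js)) (snd (tnode d e js)) k, k)"
  by (simp add: tnode_def split_beta)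

lemma tgenerated_Nil [simp]: "tgenerated d e []"
  by (simp add: tgenerated_def)

lemma tgenerated_snoc:
  "tgenerated d e (js @ [k]) \<longleftrightarrow> tgenerated d e js \<and> snd (tnode d e js) \<le> d \<and>
     e < weight d (fst (tnode d e js)) \<and> snd (tnode d e js) \<le> k \<and> k \<le> d + 1"
  unfolding tgenerated_def by (auto simp: nth_append less_Suc_eq)

lemma tQgen_snoc:
  "tQgen d e (js @ [k]) \<longleftrightarrow> tQgen d e js \<and> snd (tnode d e js) \<le> d \<and>
     e < weight d (fst (tnode d e js)) \<and> snd (tnode d e js) \<le> k \<and> 1 \<le> k \<and> k \<le> d"
  unfolding tQgen_def tgenerated_snoc by auto

lemma tgenerated_take: "tgenerated d e js \<Longrightarrow> tgenerated d e (take i js)"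
  unfolding tgenerated_def by (simp add: min_def)

lemma tQgen_take: "tQgen d e js \<Longrightarrow> tQgen d e (take i js)"
  unfolding tQgen_def using tgenerated_take by (auto dest: in_set_takeD)

lemma tgenerated_append_Cons_decomposed:
  "tgenerated d e (js @ k # ks) \<Longrightarrow> snd (tnode d e js) \<le> d \<and> e < weight d (fst (tnode d e js))"
  unfolding tgenerated_def by (drule spec[of _ "length js"]) simp

lemma tgenerated_sorted:
  "tgenerated d e js \<Longrightarrow> sorted js \<and> (\<forall>k\<in>set js. 1 \<le> k \<and> k \<le> snd (tnode d e js)) \<and>
     1 \<le> snd (tnode d e js) \<and> (\<forall>k\<in>set js. k \<le> d + 1)"
proof (induct js rule: rev_induct)
  case (snoc k js)
  then show ?case by (auto simp: tgenerated_snoc sorted_append)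
qed simp

definition upper_vol :: "nat \<Rightarrow> box \<Rightarrow> real" where
  "upper_vol d P = (\<Prod>i\<in>{1..d}. snd P i)"

definition delta_denom :: "nat \<Rightarrow> box \<Rightarrow> nat \<Rightarrow> real" where
  "delta_denom d P j = (\<Prod>i\<in>{1..<j}. fst P i) * (\<Prod>i\<in>{j..d}. snd P i)"

lemma tdelta_eq: "tdelta d e P j = ((upper_vol d P - e) / delta_denom d P j) powr (1 / real (d - j + 1))"
  by (simp add: tdelta_def upper_vol_def delta_denom_def)

lemma delta_denom_1: "delta_denom d P 1 = upper_vol d P"
  by (simp add: delta_denom_def upper_vol_def)

lemma weight_eq_upper_vol:
  assumes "1 \<le> d" "fst P d = 0"
  shows "weight d P = upper_vol d P"
proof -
  have "(\<Prod>i\<in>{1..d}. fst P i) = 0"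
    using assms by (intro prod_zero) auto
  then show ?thesis
    unfolding weight_def upper_vol_def by simp
qed

lemma powr_inverse_power: "0 < (x::real) \<Longrightarrow> 0 < n \<Longrightarrow> (x powr (1 / real n)) ^ n = x"
  by (simp add: powr_power)

lemma tchild_upper_vol_delta_denom:
  fixes e :: real
  assumes "1 \<le> j" "j \<le> k" "k \<le> d" "fst P d = 0"
  defines "Q \<equiv> tchild d e P j k" and "\<delta> \<equiv> tdelta d e P j"
  shows "upper_vol d Q = \<delta> * upper_vol d P"
    and "delta_denom d Q k = delta_denom d P j * \<delta> ^ (k - j + 1)"
    and "fst Q d = 0"
proof -
  have upper: "snd Q i = snd P i * (if i = k then \<delta> else 1)" for i
    using assms by (auto simp: Q_def tchild_def tgamma_def \<delta>_def)
  have lower: "fst Q = (\<lambda>i. if i < k then tgamma d e P j i else fst P i)"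
    using assms by (auto simp: Q_def tchild_def)
  show "upper_vol d Q = \<delta> * upper_vol d P"
    unfolding upper_vol_def upper prod.distrib using assms by simp
  show "fst Q d = 0"
    unfolding lower using assms by simp
  have "(\<Prod>i\<in>{1..<k}. fst Q i) = (\<Prod>i\<in>{1..<j}. fst Q i) * (\<Prod>i\<in>{j..<k}. fst Q i)"
    using assms by (simp add: prod.atLeastLessThan_concat)
  also have "\<dots> = (\<Prod>i\<in>{1..<j}. fst P i) * (\<Prod>i\<in>{j..<k}. \<delta> * snd P i)"
    unfolding lower using assms by (intro arg_cong2[where f = "(*)"] prod.cong) (auto simp: tgamma_def \<delta>_def)
  finally have lower_prod:
    "(\<Prod>i\<in>{1..<k}. fst Q i) = (\<Prod>i\<in>{1..<j}. fst P i) * (\<delta> ^ (k - j) * (\<Prod>i\<in>{j..<k}. snd P i))"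
    by (simp add: prod.distrib)
  have upper_prod: "(\<Prod>i\<in>{k..d}. snd Q i) = \<delta> * (\<Prod>i\<in>{k..d}. snd P i)"
    unfolding upper prod.distrib using assms by simp
  have "(\<Prod>i\<in>{j..d}. snd P i) = (\<Prod>i\<in>{j..<k}. snd P i) * (\<Prod>i\<in>{k..d}. snd P i)"
    using assms prod.atLeastLessThan_concat[of j k "Suc d" "snd P"] by (simp add: atLeastLessThanSuc_atLeastAtMost)
  then show "delta_denom d Q k = delta_denom d P j * \<delta> ^ (k - j + 1)"
    unfolding delta_denom_def lower_prod upper_prod by (simp add: algebra_simps)
qed

text \<open>b_r = W(Q^(r)_(1_r)) and \<rho>_r = \<delta> of that box (see chain_weight_Suc); \<rho>_r is junk
  unless \<epsilon> < b_r, since powr of a negative number is positive.\<close>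

definition chain_weight :: "nat \<Rightarrow> real \<Rightarrow> nat \<Rightarrow> real" where
  "chain_weight d e r = weight d (fst (tnode d e (replicate r 1)))"

definition chain_ratio :: "nat \<Rightarrow> real \<Rightarrow> nat \<Rightarrow> real" where
  "chain_ratio d e r = ((chain_weight d e r - e) / chain_weight d e r) powr (1 / real d)"

lemma tnode_replicate_1:
  assumes "1 \<le> d"
  shows "snd (tnode d e (replicate r 1)) = 1 \<and> fst (fst (tnode d e (replicate r 1))) d = 0"
proof (induct r)
  case 0
  then show ?case by (simp add: unit_box_def)
next
  case (Suc r)
  then show ?case
    using assms tchild_upper_vol_delta_denom(3)[of 1 1 d "fst (tnode d e (replicate r 1))" e]
    by (simp flip: replicate_append_same)
qed

lemma chain_weight_eq_upper_vol:
  "1 \<le> d \<Longrightarrow> chain_weight d e r = upper_vol d (fst (tnode d e (replicate r 1)))"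
  unfolding chain_weight_def using tnode_replicate_1 by (intro weight_eq_upper_vol) auto

lemma chain_weight_0: "1 \<le> d \<Longrightarrow> chain_weight d e 0 = 1"
  by (simp add: chain_weight_eq_upper_vol upper_vol_def unit_box_def)

lemma chain_weight_Suc:
  assumes "1 \<le> d"
  shows "chain_weight d e (Suc r) = chain_ratio d e r * chain_weight d e r"
proof -
  let ?P = "fst (tnode d e (replicate r 1))"
  have node: "snd (tnode d e (replicate r 1)) = 1" "fst ?P d = 0"
    using tnode_replicate_1[OF assms] by auto
  have "chain_weight d e (Suc r) = upper_vol d (tchild d e ?P 1 1)"
    using assms node by (simp add: chain_weight_eq_upper_vol flip: replicate_append_same)
  also have "\<dots> = tdelta d e ?P 1 * upper_vol d ?P"
    using tchild_upper_vol_delta_denom(1)[of 1 1 d ?P e] node assms by simp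
  also have "tdelta d e ?P 1 = chain_ratio d e r"
    unfolding tdelta_eq chain_ratio_def delta_denom_1 chain_weight_eq_upper_vol[OF assms]
    using assms by simp
  finally show ?thesis
    using chain_weight_eq_upper_vol[OF assms] by simp
qed

lemma chain_ratio:
  assumes "1 \<le> d" "0 < e" "e < chain_weight d e r"
  shows chain_ratio_power: "chain_ratio d e r ^ d * chain_weight d e r = chain_weight d e r - e"
    and chain_ratio_pos: "0 < chain_ratio d e r"
    and chain_ratio_le_1: "chain_ratio d e r \<le> 1"
proof -
  let ?b = "chain_weight d e r" and ?\<rho> = "chain_ratio d e r"
  have b: "0 < ?b" "0 < (?b - e) / ?b"
    using assms by auto
  have power: "?\<rho> ^ d = (?b - e) / ?b"
    unfolding chain_ratio_def using b assms by (intro powr_inverse_power) auto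
  then show "?\<rho> ^ d * ?b = ?b - e"
    using b(1) by (simp add: divide_eq_eq)
  show "0 < ?\<rho>"
    unfolding chain_ratio_def using b(2) by (subst powr_gt_zero) auto
  have "?\<rho> ^ d \<le> 1 ^ d"
    using power b assms by simp
  then show "?\<rho> \<le> 1"
    using power_le_imp_le_base[of ?\<rho> "d - 1" 1] assms by simp
qed

text \<open>Bernoulli's inequality: (1 - x)^(1/d) \<le> 1 - x/d.\<close>

lemma chain_weight_Suc_le:
  assumes "1 \<le> d" "0 < e" "e < chain_weight d e r"
  shows "chain_weight d e (Suc r) \<le> chain_weight d e r - e / d"
proof -
  let ?b = "chain_weight d e r" and ?\<rho> = "chain_ratio d e r"
  let ?x = "e / ?b / d"
  have b: "0 < ?b" using assms by simp
  have "1 \<le> real d"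
    using assms by simp
  then have "?b \<le> real d * ?b"
    using mult_right_mono[of 1 "real d" ?b] b by simp
  then have "e \<le> real d * ?b"
    using assms by linarith
  then have x: "?x \<le> 1"
    using assms b by (simp add: field_simps)
  have "(1 - real d * ?x) * ?b = ?b - e"
    using assms b by (simp add: field_simps)
  then have "?\<rho> ^ d * ?b = (1 - real d * ?x) * ?b"
    using chain_ratio_power[OF assms] by simp
  also have "\<dots> \<le> (1 - ?x) ^ d * ?b"
    using Bernoulli_inequality[of "- ?x" d] x b by (intro mult_right_mono) auto
  finally have "?\<rho> ^ d \<le> (1 - ?x) ^ d"
    using b by simp
  then have "?\<rho> \<le> 1 - ?x"
    using power_le_imp_le_base[of ?\<rho> "d - 1" "1 - ?x"] assms x by simp
  then have "?\<rho> * ?b \<le> (1 - ?x) * ?b"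
    using b by (intro mult_right_mono) auto
  then show ?thesis
    using chain_weight_Suc[OF assms(1)] b by (simp add: field_simps)
qed

lemma chain_ratio_Suc_le:
  assumes "1 \<le> d" "0 < e" "e < chain_weight d e r" "e < chain_weight d e (Suc r)"
  shows "chain_ratio d e (Suc r) \<le> chain_ratio d e r"
proof -
  let ?b = "chain_weight d e r" and ?b' = "chain_weight d e (Suc r)"
  have "0 \<le> e / real d"
    using assms by simp
  then have "?b' \<le> ?b"
    using chain_weight_Suc_le[OF assms(1-3)] by linarith
  then have "1 - e / ?b' \<le> 1 - e / ?b"
    using assms by (simp add: frac_le)
  moreover have "chain_ratio d e (Suc r) ^ d = 1 - e / ?b'" "chain_ratio d e r ^ d = 1 - e / ?b"
    using chain_ratio_power[OF assms(1,2,4)] chain_ratio_power[OF assms(1-3)] assms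
    by (simp_all add: field_simps)
  ultimately have "chain_ratio d e (Suc r) ^ d \<le> chain_ratio d e r ^ d"
    by simp
  then show ?thesis
    using power_le_imp_le_base[of "chain_ratio d e (Suc r)" "d - 1" "chain_ratio d e r"]
      chain_ratio_pos[OF assms(1-3)] assms by simp
qed

lemma tQgen_replicate_1_iff:
  assumes "1 \<le> d"
  shows "tQgen d e (replicate r 1) \<longleftrightarrow> (\<forall>i<r. e < chain_weight d e i)"
proof (induct r)
  case (Suc r)
  have "tQgen d e (replicate (Suc r) 1) \<longleftrightarrow> tQgen d e (replicate r 1) \<and> e < chain_weight d e r"
    using tnode_replicate_1[OF assms, of e r] assms
    by (simp add: tQgen_snoc chain_weight_def flip: replicate_append_same)
  then show ?case
    using Suc by (auto simp: less_Suc_eq)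
qed (simp add: tQgen_def)

lemma chain_weight_le_linear:
  assumes "1 \<le> d" "0 < e" "\<forall>i<r. e < chain_weight d e i"
  shows "chain_weight d e r \<le> 1 - real r * e / d"
  using assms(3)
proof (induct r)
  case 0
  then show ?case using chain_weight_0[OF assms(1)] by simp
next
  case (Suc r)
  then have "chain_weight d e r \<le> 1 - real r * e / d" "e < chain_weight d e r"
    by auto
  moreover have "real (Suc r) * e / d = real r * e / d + e / d"
    by (simp add: add_divide_distrib algebra_simps)
  ultimately show ?case
    using chain_weight_Suc_le[OF assms(1,2)] by fastforce
qed

text \<open>The algebraic core of the domination step: B, b are the weights of a box and of the
  leftmost box at the same depth, \<delta> is the box's \<delta>, \<rho> and \<rho>' the leftmost ratios at this
  and the next depth.\<close>

lemma excess_le_chain_excess: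
  fixes B b \<delta> \<rho> \<rho>' \<epsilon> :: real and n d :: nat
  assumes "0 < \<epsilon>" "\<epsilon> < B" "B \<le> b" "0 < \<delta>" "\<delta> \<le> \<rho>" "\<rho> \<le> 1" "0 \<le> \<rho>'" "\<rho>' \<le> \<rho>"
    and chain: "\<rho> ^ d * b = b - \<epsilon>" "\<rho>' ^ d * (\<rho> * b) = \<rho> * b - \<epsilon>"
    and "n < d"
  shows "(\<delta> * B - \<epsilon>) * \<delta> ^ n \<le> (B - \<epsilon>) * \<rho>' ^ Suc n"
proof (cases "\<delta> * B \<le> \<epsilon>")
  case True
  then have "(\<delta> * B - \<epsilon>) * \<delta> ^ n \<le> 0"
    using assms by (intro mult_nonpos_nonneg) auto
  moreover have "0 \<le> (B - \<epsilon>) * \<rho>' ^ Suc n"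
    using assms by simp
  ultimately show ?thesis
    by linarith
next
  case False
  obtain s where s: "d = Suc n + s"
    using \<open>n < d\<close> less_iff_Suc_add[of n d] by auto
  have b: "0 < b - \<epsilon>" "0 < \<rho>"
    using assms by linarith+
  have "\<delta> * B \<le> \<delta> * b" "\<delta> * b \<le> \<rho> * b"
    using assms b by (simp_all add: mult_right_mono)
  have "(\<delta> * B - \<epsilon>) * (b - \<epsilon>) = (\<delta> * b - \<epsilon>) * (B - \<epsilon>) - \<epsilon> * (b - B) * (1 - \<delta>)"
    by algebra
  also have "\<dots> \<le> (\<delta> * b - \<epsilon>) * (B - \<epsilon>)"
    using assms by simp
  also have "\<dots> \<le> (\<rho> * b - \<epsilon>) * (B - \<epsilon>)"
    using \<open>\<delta> * b \<le> \<rho> * b\<close> assms by (intro mult_right_mono) auto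
  finally have cross: "(\<delta> * B - \<epsilon>) * (b - \<epsilon>) \<le> (\<rho> * b - \<epsilon>) * (B - \<epsilon>)" .
  have "\<epsilon> \<le> \<rho> * b"
    using False \<open>\<delta> * B \<le> \<delta> * b\<close> \<open>\<delta> * b \<le> \<rho> * b\<close> by linarith
  then have "0 \<le> (\<rho> * b - \<epsilon>) * (B - \<epsilon>)"
    using assms by simp
  then have "(\<delta> * B - \<epsilon>) * (b - \<epsilon>) * \<delta> ^ n \<le> (\<rho> * b - \<epsilon>) * (B - \<epsilon>) * \<rho> ^ n"
    using mult_mono[OF cross power_mono[of \<delta> \<rho> n]] assms by simp
  also have "\<dots> = \<rho>' ^ Suc n * \<rho>' ^ s * \<rho> ^ Suc n * b * (B - \<epsilon>)"
    unfolding chain(2)[symmetric] s by (simp add: power_add algebra_simps)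
  also have "\<dots> \<le> \<rho>' ^ Suc n * \<rho> ^ s * \<rho> ^ Suc n * b * (B - \<epsilon>)"
    using assms b by (intro mult_right_mono mult_left_mono power_mono) auto
  also have "\<dots> = (B - \<epsilon>) * \<rho>' ^ Suc n * (b - \<epsilon>)"
    unfolding chain(1)[symmetric] s by (simp add: power_add algebra_simps)
  finally show ?thesis
    using b by (simp add: mult.commute mult.left_commute)
qed

text \<open>Invariant of a box P of type j at depth r. Since \<delta>^P^(d-j+1) = (upper_vol - \<epsilon>) /
  delta_denom, the last conjunct says \<delta>^P \<le> \<rho>_r.\<close>

definition chain_dominated :: "nat \<Rightarrow> real \<Rightarrow> nat \<Rightarrow> box \<Rightarrow> nat \<Rightarrow> bool" where
  "chain_dominated d e r P j \<longleftrightarrow>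
     1 \<le> j \<and> fst P d = 0 \<and> 0 < delta_denom d P j \<and> upper_vol d P \<le> chain_weight d e r \<and>
     (e < chain_weight d e r \<longrightarrow>
        upper_vol d P - e \<le> delta_denom d P j * chain_ratio d e r ^ (d - j + 1))"

lemma chain_dominated_unit_box:
  assumes "1 \<le> d" "0 < e"
  shows "chain_dominated d e 0 unit_box 1"
proof -
  have "upper_vol d unit_box = 1" "delta_denom d unit_box 1 = 1"
    by (simp_all add: upper_vol_def delta_denom_def unit_box_def)
  moreover have "e < 1 \<Longrightarrow> 1 - e \<le> chain_ratio d e 0 ^ d"
    using chain_ratio_power[of d e 0] assms chain_weight_0 by simp
  ultimately show ?thesis
    using assms chain_weight_0 by (simp add: chain_dominated_def unit_box_def)
qed

lemma chain_dominated_tdelta: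
  assumes "1 \<le> d" "0 < e" "chain_dominated d e r P j" "e < upper_vol d P"
  shows "0 < tdelta d e P j"
    and "tdelta d e P j ^ (d - j + 1) * delta_denom d P j = upper_vol d P - e"
    and "tdelta d e P j \<le> chain_ratio d e r"
proof -
  define B p \<rho> \<delta> m where "B = upper_vol d P" and "p = delta_denom d P j"
    and "\<rho> = chain_ratio d e r" and "\<delta> = tdelta d e P j" and "m = d - j + 1"
  have p: "0 < p" and "e < chain_weight d e r"
    using assms by (auto simp: chain_dominated_def p_def)
  then have excess: "B - e \<le> p * \<rho> ^ m" and \<rho>: "0 < \<rho>"
    using assms chain_ratio_pos[OF assms(1,2)]
    by (simp_all add: chain_dominated_def B_def p_def \<rho>_def m_def)
  have "0 < (B - e) / p" "0 < m"
    using assms p by (simp_all add: B_def m_def)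
  then show \<delta>: "0 < \<delta>" "\<delta> ^ m * p = B - e"
    unfolding \<delta>_def tdelta_eq B_def[symmetric] p_def[symmetric] m_def[symmetric]
    using p assms(4) by (simp_all add: powr_inverse_power B_def)
  then have "p * \<delta> ^ m \<le> p * \<rho> ^ m"
    using excess by (simp add: mult.commute)
  then have "\<delta> ^ m \<le> \<rho> ^ m"
    using p by simp
  then show "\<delta> \<le> \<rho>"
    using power_le_imp_le_base[of \<delta> "m - 1" \<rho>] \<open>0 < m\<close> \<rho> by simp
qed

lemma chain_dominated_tchild:
  assumes "1 \<le> d" "0 < e" and dom: "chain_dominated d e r P j"
    and "e < upper_vol d P" "j \<le> k" "k \<le> d"
  shows "chain_dominated d e (Suc r) (tchild d e P j k) k"
proof -
  define B p b \<rho> \<delta> where "B = upper_vol d P" and "p = delta_denom d P j"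
    and "b = chain_weight d e r" and "\<rho> = chain_ratio d e r" and "\<delta> = tdelta d e P j"
  have j: "1 \<le> j" "fst P d = 0" and p: "0 < p" and "B \<le> b"
    using dom by (auto simp: chain_dominated_def B_def p_def b_def)
  have "e < B" "e < b"
    using assms \<open>B \<le> b\<close> B_def by linarith+
  have \<rho>: "\<rho> ^ d * b = b - e" "\<rho> \<le> 1"
    using chain_ratio[OF assms(1,2) \<open>e < b\<close>[unfolded b_def]] by (simp_all add: \<rho>_def b_def)
  have \<delta>: "0 < \<delta>" "\<delta> ^ (d - j + 1) * p = B - e" "\<delta> \<le> \<rho>"
    using chain_dominated_tdelta[OF assms(1-4)] by (simp_all add: \<delta>_def B_def p_def \<rho>_def)
  have child: "upper_vol d (tchild d e P j k) = \<delta> * B"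
    "delta_denom d (tchild d e P j k) k = p * \<delta> ^ (k - j + 1)"
    "fst (tchild d e P j k) d = 0"
    using tchild_upper_vol_delta_denom[OF j(1) assms(5,6) j(2), of e]
    by (simp_all add: \<delta>_def B_def p_def)
  have b': "chain_weight d e (Suc r) = \<rho> * b"
    using chain_weight_Suc[OF assms(1)] by (simp add: \<rho>_def b_def)
  have "\<delta> * B \<le> \<rho> * b"
    using \<delta> \<open>B \<le> b\<close> \<open>e < B\<close> assms(2) by (intro mult_mono) auto
  moreover have "\<delta> * B - e \<le> p * \<delta> ^ (k - j + 1) * chain_ratio d e (Suc r) ^ (d - k + 1)"
    if "e < chain_weight d e (Suc r)"
  proof -
    let ?\<rho>' = "chain_ratio d e (Suc r)"
    have \<rho>': "?\<rho>' ^ d * (\<rho> * b) = \<rho> * b - e" "0 < ?\<rho>'"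
      using chain_ratio[OF assms(1,2) that] b' by simp_all
    have "?\<rho>' \<le> \<rho>"
      using chain_ratio_Suc_le[OF assms(1,2) _ that] \<open>e < b\<close> by (simp add: \<rho>_def b_def)
    have m: "d - j + 1 = Suc (d - k) + (k - j)"
      using assms j by simp
    have "(\<delta> * B - e) * \<delta> ^ (d - k) \<le> (B - e) * ?\<rho>' ^ Suc (d - k)"
      using excess_le_chain_excess[OF assms(2) \<open>e < B\<close> \<open>B \<le> b\<close> \<delta>(1,3) \<rho>(2) _ \<open>?\<rho>' \<le> \<rho>\<close> \<rho>(1) \<rho>'(1)]
        \<rho>' j assms by simp
    also have "\<dots> = (p * \<delta> ^ (k - j + 1) * ?\<rho>' ^ (d - k + 1)) * \<delta> ^ (d - k)"
      unfolding \<delta>(2)[symmetric] m by (simp add: power_add algebra_simps)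
    finally show ?thesis
      using \<delta>(1) by (simp add: mult_le_cancel_right)
  qed
  ultimately show ?thesis
    using child b' assms p \<delta> by (simp add: chain_dominated_def B_def b_def)
qed

lemma tQgen_chain_dominated:
  assumes "1 \<le> d" "0 < e" "tQgen d e js"
  shows "chain_dominated d e (length js) (fst (tnode d e js)) (snd (tnode d e js))"
  using assms(3)
proof (induct js rule: rev_induct)
  case Nil
  then show ?case using chain_dominated_unit_box[OF assms(1,2)] by simp
next
  case (snoc k js)
  then have "tQgen d e js" "e < weight d (fst (tnode d e js))" "snd (tnode d e js) \<le> k" "k \<le> d"
    by (simp_all add: tQgen_snoc)
  moreover note dom = snoc(1)[OF \<open>tQgen d e js\<close>]
  moreover have "weight d (fst (tnode d e js)) = upper_vol d (fst (tnode d e js))"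
    using dom weight_eq_upper_vol[OF assms(1)] by (simp add: chain_dominated_def)
  ultimately show ?case
    using chain_dominated_tchild[OF assms(1,2)] by simp
qed

lemma chain_weight_gt_of_tQgen:
  assumes "1 \<le> d" "0 < e" "tQgen d e js" "e < weight d (fst (tnode d e js))" "i \<le> length js"
  shows "e < chain_weight d e i"
proof -
  let ?P = "fst (tnode d e (take i js))"
  have "e < weight d ?P"
  proof (cases "i = length js")
    case False
    then have "js = take i js @ js ! i # drop (Suc i) js"
      using assms(5) by (simp add: id_take_nth_drop)
    then show ?thesis
      using tgenerated_append_Cons_decomposed[of d e "take i js"] assms(3) unfolding tQgen_def by metis
  qed (use assms in simp)
  moreover have "chain_dominated d e i ?P (snd (tnode d e (take i js)))"
    using tQgen_chain_dominated[OF assms(1,2) tQgen_take[OF assms(3)], of i] assms(5)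
    by (simp add: min_absorb2)
  ultimately show ?thesis
    using weight_eq_upper_vol[OF assms(1)] by (auto simp: chain_dominated_def)
qed

definition chain_height :: "nat \<Rightarrow> real \<Rightarrow> nat" where
  "chain_height d e = (LEAST r. chain_weight d e r \<le> e)"

lemma chain_height:
  assumes "1 \<le> d" "0 < e" "e \<le> 1"
  shows chain_weight_chain_height: "chain_weight d e (chain_height d e) \<le> e"
    and chain_weight_less_chain_height: "i < chain_height d e \<Longrightarrow> e < chain_weight d e i"
    and chain_height_le_ceiling: "chain_height d e \<le> nat \<lceil>real d * (1 / e - 1)\<rceil>"
proof -
  let ?N = "nat \<lceil>real d * (1 / e - 1)\<rceil>"
  have "\<exists>r \<le> ?N. chain_weight d e r \<le> e"
  proof (cases "\<forall>i < ?N. e < chain_weight d e i")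
    case True
    have "real d * (1 / e - 1) \<le> real ?N"
      using assms by linarith
    then have "real d * (1 / e - 1) * (e / d) \<le> real ?N * (e / d)"
      using assms by (intro mult_right_mono) auto
    moreover have "real d * (1 / e - 1) * (e / d) = 1 - e"
      using assms by (simp add: field_simps)
    ultimately have "1 - real ?N * e / d \<le> e"
      by simp
    then show ?thesis
      using chain_weight_le_linear[OF assms(1,2) True] by auto
  qed (auto simp: not_less intro: less_imp_le)
  then obtain r where r: "r \<le> ?N" "chain_weight d e r \<le> e"
    by blast
  show "chain_weight d e (chain_height d e) \<le> e"
    unfolding chain_height_def using r(2) by (rule LeastI)
  show "i < chain_height d e \<Longrightarrow> e < chain_weight d e i"
    unfolding chain_height_def using not_less_Least by (metis not_less)
  have "chain_height d e \<le> r"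
    unfolding chain_height_def using r by (intro Least_le) auto
  then show "chain_height d e \<le> ?N"
    using r by simp
qed

lemma length_less_chain_height:
  assumes "1 \<le> d" "0 < e" "e \<le> 1" "tQgen d e js" "e < weight d (fst (tnode d e js))"
  shows "length js < chain_height d e"
  using chain_weight_gt_of_tQgen[OF assms(1,2,4,5), of "chain_height d e"]
    chain_weight_chain_height[OF assms(1-3)] by linarith

lemma theight_eq_chain_height:
  assumes "1 \<le> d" "0 < e" "e \<le> 1"
  shows "theight d e = chain_height d e"
proof (cases "weight d unit_box \<le> e")
  case True
  then have "chain_height d e = 0"
    unfolding chain_height_def chain_weight_def by simp
  then show ?thesis
    using True by (simp add: theight_def)
next
  case False
  let ?h = "chain_height d e"
  let ?heavy = "\<lambda>h. 1 \<le> h \<and> (\<exists>js. length js = h - 1 \<and> tQgen d e js \<and> weight d (fst (tnode d e js)) > e)"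
  have "e < chain_weight d e 0"
    using False by (simp add: chain_weight_def)
  then have "?h \<noteq> 0"
    using chain_weight_chain_height[OF assms] by (metis not_le)
  moreover have "tQgen d e (replicate (?h - 1) 1)"
    using tQgen_replicate_1_iff[OF assms(1)] chain_weight_less_chain_height[OF assms] by simp
  moreover have "e < weight d (fst (tnode d e (replicate (?h - 1) 1)))"
    using chain_weight_less_chain_height[OF assms, of "?h - 1"] \<open>?h \<noteq> 0\<close>
    by (simp add: chain_weight_def)
  ultimately have "?heavy ?h"
    by (intro conjI exI[of _ "replicate (?h - 1) 1"]) auto
  moreover have "h \<le> ?h" if "?heavy h" for h
    using that length_less_chain_height[OF assms] by fastforce
  ultimately have "(GREATEST h. ?heavy h) = ?h"
    by (rule Greatest_equality)
  then show ?thesis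
    using False by (simp add: theight_def)
qed

lemma Least_replicate_1_eq_chain_height:
  assumes "1 \<le> d" "0 < e" "e \<le> 1"
  shows "(LEAST r. tQgen d e (replicate r 1) \<and> weight d (fst (tnode d e (replicate r 1))) \<le> e)
    = chain_height d e"
proof (rule Least_equality)
  show "tQgen d e (replicate (chain_height d e) 1) \<and>
      weight d (fst (tnode d e (replicate (chain_height d e) 1))) \<le> e"
    using tQgen_replicate_1_iff[OF assms(1)] chain_height[OF assms] by (simp add: chain_weight_def)
next
  fix r
  assume "tQgen d e (replicate r 1) \<and> weight d (fst (tnode d e (replicate r 1))) \<le> e"
  then show "chain_height d e \<le> r"
    unfolding chain_height_def chain_weight_def by (simp add: Least_le)
qed

lemma real_chain_height_le_ceiling:
  assumes "1 \<le> d" "0 < e" "e \<le> 1"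
  shows "real (chain_height d e) \<le> of_int \<lceil>real d * (1 / e - 1)\<rceil>"
proof -
  have "1 \<le> 1 / e"
    using assms by simp
  then have "0 \<le> real d * (1 / e - 1)"
    by (intro mult_nonneg_nonneg) auto
  then have "int (chain_height d e) \<le> \<lceil>real d * (1 / e - 1)\<rceil>"
    using chain_height_le_ceiling[OF assms] by (simp add: le_nat_iff)
  then show ?thesis
    by (metis of_int_le_iff of_int_of_nat_eq)
qed

definition leaf_paths :: "nat \<Rightarrow> real \<Rightarrow> nat list set" where
  "leaf_paths d e = {js. tgenerated d e js \<and>
     (snd (tnode d e js) = d + 1 \<or> weight d (fst (tnode d e js)) \<le> e)}"

lemma tleaves_eq_image_leaf_paths: "tleaves d e = (\<lambda>js. fst (tnode d e js)) ` leaf_paths d e"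
  unfolding tleaves_def leaf_paths_def by blast

lemma length_leaf_path_le:
  assumes "1 \<le> d" "0 < e" "e \<le> 1" "js \<in> leaf_paths d e"
  shows "length js \<le> chain_height d e"
proof (cases js rule: rev_cases)
  case (snoc ks k)
  then have "tgenerated d e ks" "snd (tnode d e ks) \<le> d" "e < weight d (fst (tnode d e ks))"
    using assms(4) by (simp_all add: leaf_paths_def tgenerated_snoc)
  moreover from this have "tQgen d e ks"
    using tgenerated_sorted[of d e ks] by (auto simp: tQgen_def)
  ultimately show ?thesis
    using length_less_chain_height[OF assms(1-3)] snoc by fastforce
qed simp

text \<open>A leaf path is never a proper prefix of another leaf path, so padding is injective.\<close>

definition pad_path :: "nat \<Rightarrow> nat \<Rightarrow> nat list \<Rightarrow> nat list" where
  "pad_path d R js = js @ replicate (R - length js) (d + 1)"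

lemma sorted_pad_path: "tgenerated d e js \<Longrightarrow> sorted (pad_path d R js)"
  using tgenerated_sorted[of d e js] unfolding pad_path_def by (auto simp: sorted_append)

lemma pad_path_eq_imp_eq:
  assumes "js \<in> leaf_paths d e" "js' \<in> leaf_paths d e" "pad_path d R js = pad_path d R js'"
    and "length js \<le> length js'"
  shows "js = js'"
proof (rule ccontr)
  assume "js \<noteq> js'"
  have prefix: "take (length js) js' = js"
    using arg_cong[OF assms(3), of "take (length js)"] assms(4) unfolding pad_path_def by simp
  then have "length js \<noteq> length js'"
    using \<open>js \<noteq> js'\<close> by auto
  then have "js' = js @ js' ! length js # drop (Suc (length js)) js'"
    using id_take_nth_drop[of "length js" js'] prefix assms(4) by simp
  then have "tgenerated d e (js @ js' ! length js # drop (Suc (length js)) js')"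
    using assms(2) by (simp add: leaf_paths_def)
  then have "snd (tnode d e js) \<le> d" "e < weight d (fst (tnode d e js))"
    using tgenerated_append_Cons_decomposed by blast+
  then show False
    using assms(1) by (simp add: leaf_paths_def)
qed

lemma card_tleaves_le_binomial:
  assumes "1 \<le> d" "0 < e" "e \<le> 1"
  shows "finite (tleaves d e) \<and> card (tleaves d e) \<le> (chain_height d e + d) choose d"
proof -
  let ?R = "chain_height d e"
  let ?f = "\<lambda>js. mset (pad_path d ?R js)"
  let ?M = "multisets_of_size {1..d+1} ?R"
  have sub: "?f ` leaf_paths d e \<subseteq> ?M"
  proof
    fix X assume "X \<in> ?f ` leaf_paths d e"
    then obtain js where js: "js \<in> leaf_paths d e" "X = ?f js"
      by blast
    then have "length js \<le> ?R" "set (pad_path d ?R js) \<subseteq> {1..d+1}"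
      using length_leaf_path_le[OF assms] tgenerated_sorted[of d e js]
      by (auto simp: leaf_paths_def pad_path_def)
    then show "X \<in> ?M"
      using js(2) unfolding multisets_of_size_def pad_path_def by auto
  qed
  have inj: "inj_on ?f (leaf_paths d e)"
  proof (rule inj_onI)
    fix js js' assume js: "js \<in> leaf_paths d e" "js' \<in> leaf_paths d e" "?f js = ?f js'"
    have "sorted (pad_path d ?R js)" "sorted (pad_path d ?R js')"
      using js sorted_pad_path by (auto simp: leaf_paths_def)
    then have "pad_path d ?R js = pad_path d ?R js'"
      using js(3) by (metis sorted_sort_id sorted_list_of_multiset_mset)
    then show "js = js'"
      using pad_path_eq_imp_eq js by (metis nat_le_linear)
  qed
  have "(d + ?R) choose ?R = (?R + d) choose d"
    using binomial_symmetric[of ?R "d + ?R"] by (simp add: add.commute)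
  then have M: "finite ?M" "card ?M = (?R + d) choose d"
    by (simp_all add: finite_multisets_of_size card_multisets_of_size)
  have fin: "finite (leaf_paths d e)"
    using finite_imageD[OF finite_subset[OF sub M(1)] inj] .
  have "card (leaf_paths d e) \<le> card ?M"
    using card_inj_on_le[OF inj sub M(1)] .
  moreover have "card (tleaves d e) \<le> card (leaf_paths d e)"
    unfolding tleaves_eq_image_leaf_paths using fin by (rule card_image_le)
  ultimately show ?thesis
    using fin M(2) unfolding tleaves_eq_image_leaf_paths by simp
qed

lemma binomial_mult_fact_eq_prod:
  "real ((R + d) choose d) * fact d = (\<Prod>i\<in>{1..d}. real R + real i)"
proof (induct d)
  case (Suc d)
  have "real ((R + Suc d) choose Suc d) * fact (Suc d) =
      real ((Suc (R + d) choose Suc d) * Suc d) * fact d"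
    by (simp add: algebra_simps)
  also have "(Suc (R + d) choose Suc d) * Suc d = Suc (R + d) * ((R + d) choose d)"
    by (rule Suc_times_binomial_eq[symmetric])
  also have "real (Suc (R + d) * ((R + d) choose d)) * fact d =
      (real R + real (Suc d)) * (real ((R + d) choose d) * fact d)"
    by (simp add: algebra_simps)
  finally show ?case
    using Suc by (simp add: prod.cl_ivl_Suc)
qed simp

lemma binomial_le_AM_GM:
  "real ((R + d) choose d) \<le> (real R + (real d + 1) / 2) ^ d / fact d"
proof (cases "d = 0")
  case False
  let ?P = "\<Prod>i\<in>{1..d}. real R + real i"
  have "(\<Sum>i\<in>{1..d}. real R + real i) = real d * (real R + (real d + 1) / 2)"
    using double_gauss_sum_from_Suc_0[of d, where 'a = real] by (simp add: sum.distrib algebra_simps)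
  then have "?P powr (1 / real d) \<le> real R + (real d + 1) / 2"
    using arith_geom_mean[of "{1..d}" "\<lambda>i. real R + real i"] False
    by (simp add: sum_divide_distrib[symmetric])
  moreover have "0 < ?P"
    by (intro prod_pos) auto
  ultimately have P_le: "?P \<le> (real R + (real d + 1) / 2) ^ d"
    using power_mono[of "?P powr (1 / real d)" _ d] False powr_inverse_power[of ?P d] by simp
  have "real ((R + d) choose d) = ?P / fact d"
    using binomial_mult_fact_eq_prod[of R d] by (simp add: field_simps)
  then show ?thesis
    using divide_right_mono[OF P_le fact_ge_zero] by (simp only:)
qed simp

lemma binomial_2_le:
  assumes "real R < 2 * x - 1"
  shows "real ((R + 2) choose 2) \<le> 2 * (x + 1 / 2) * x"
proof -
  have "real ((R + 2) choose 2) = (real R + 1) * (real R + 2) / 2"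
    using binomial_mult_fact_eq_prod[of R 2] by (simp add: numeral_2_eq_2 field_simps)
  also have "\<dots> \<le> (2 * x) * (2 * x + 1) / 2"
    using assms by (intro divide_right_mono mult_mono) auto
  finally show ?thesis
    by (simp add: field_simps)
qed

lemma binomial_le_power:
  assumes "1 \<le> d" "real R < real d * (x - 1) + 1"
  shows "real ((R + d) choose d) \<le> real d ^ d / fact d * (x - 1 / 2 * (1 - 3 / real d)) ^ d"
proof -
  have "real d * (x - 1 / 2 * (1 - 3 / real d)) = real d * (x - 1) + 1 + (real d + 1) / 2"
    using assms by (simp add: field_simps)
  then have "real R + (real d + 1) / 2 \<le> real d * (x - 1 / 2 * (1 - 3 / real d))"
    using assms by linarith
  then have "(real R + (real d + 1) / 2) ^ d \<le> (real d * (x - 1 / 2 * (1 - 3 / real d))) ^ d"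
    by (intro power_mono) auto
  with binomial_le_AM_GM[of R d]
  have "real ((R + d) choose d) \<le> (real d * (x - 1 / 2 * (1 - 3 / real d))) ^ d / fact d"
    by (meson divide_right_mono fact_ge_zero order.trans)
  then show ?thesis
    by (simp add: power_mult_distrib)
qed

lemma shifted_power_le:
  assumes "3 \<le> d" "1 \<le> x"
  shows "real d ^ d / fact d * (x - 1 / 2 * (1 - 3 / real d)) ^ d \<le> real d ^ d / fact d * x ^ d"
proof -
  define c where "c = 1 - 3 / real d"
  have "0 \<le> c" "c \<le> 1"
    using assms by (simp_all add: c_def field_simps)
  then have "0 \<le> 1 / 2 * c" "1 / 2 * c \<le> x"
    using assms by linarith+
  then show ?thesis
    unfolding c_def by (intro mult_left_mono power_mono) auto
qed

theorem mainTheorem3: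
  fixes d :: nat and \<epsilon> :: real
  assumes "1 \<le> d" and "0 < \<epsilon>" and "\<epsilon> \<le> 1"
  shows "theight d \<epsilon> =
           (LEAST r. tQgen d \<epsilon> (replicate r 1) \<and>
                     weight d (fst (tnode d \<epsilon> (replicate r 1))) \<le> \<epsilon>)
       \<and> real (theight d \<epsilon>) \<le> of_int \<lceil>real d * (1 / \<epsilon> - 1)\<rceil>
       \<and> finite (tleaves d \<epsilon>)
       \<and> (d = 2 \<longrightarrow> real (card (tleaves d \<epsilon>)) \<le> 2 * (1 / \<epsilon> + 1 / 2) * (1 / \<epsilon>))
       \<and> (3 \<le> d \<longrightarrow> real (card (tleaves d \<epsilon>))
              \<le> real d ^ d / fact d * (1 / \<epsilon> - 1 / 2 * (1 - 3 / real d)) ^ d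
            \<and> real d ^ d / fact d * (1 / \<epsilon> - 1 / 2 * (1 - 3 / real d)) ^ d
              \<le> real d ^ d / fact d * (1 / \<epsilon>) ^ d)"
proof -
  let ?h = "chain_height d \<epsilon>" and ?x = "1 / \<epsilon>"
  have height: "real ?h \<le> of_int \<lceil>real d * (?x - 1)\<rceil>"
    by (rule real_chain_height_le_ceiling[OF assms])
  then have height_lt: "real ?h < real d * (?x - 1) + 1"
    using ceiling_correct[of "real d * (?x - 1)"] by linarith
  obtain finite: "finite (tleaves d \<epsilon>)"
    and card: "real (card (tleaves d \<epsilon>)) \<le> real ((?h + d) choose d)"
    using card_tleaves_le_binomial[OF assms] by simp
  have "d = 2 \<longrightarrow> real (card (tleaves d \<epsilon>)) \<le> 2 * (?x + 1 / 2) * ?x"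
    using card binomial_2_le[of ?h ?x] height_lt by auto
  moreover have "1 \<le> ?x"
    using assms by simp
  ultimately show ?thesis
    using theight_eq_chain_height[OF assms] Least_replicate_1_eq_chain_height[OF assms] height finite
      card binomial_le_power[OF assms(1) height_lt] shifted_power_le
    by (simp del: One_nat_def)
qed

end
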